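(* Let $N=\{1,\ldots,n\}$ and let $\mathscr{D}$ be a family of subsets in $2^N\setminus\{\varnothing,N\}$. Let $v_{\mathscr{D}}$ be the game defined by $v_{\mathscr{D}}(S)=1$ if $S\in\mathscr{D}$ or $S=N$, and $v_{\mathscr{D}}(S)=0$ otherwise. Then $v_{\mathscr{D}}$ is a vertex of $\mathscr{BG}_+(n)$ if and only if either $\mathscr{D}=\varnothing$ or $\bigcap_{S\in\mathscr{D}}S\neq\varnothing$.
   Context: A game on $N$ is a map $v:2^N\to\mathbb{R}$ with $v(\varnothing)=0$. $\mathscr{G}_+(n)$ is the set of games with $v\geqslant 0$ and $v(N)=1$. The core of $v$ is $C(v)=\{x\in\mathbb{R}^N: \sum_{i\in S}x_i\geqslant v(S)\ \forall S,\ \sum_{i\in N}x_i=v(N)\}$, and $v$ is balanced iff $C(v)\neq\varnothing$. $\mathscr{BG}_+(n)$ is the polytope of balanced games in $\mathscr{G}_+(n)$, in $\mathbb{R}^{2^N\setminus\{\varnothing,N\}}$. *)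

theory Defs
  imports "HOL-Analysis.Analysis"
begin

text \<open>The player set N = {1..n}.  A game on N is represented as a function
  v :: nat set => real; we only consider games that vanish outside Pow N
  (canonical representative), with v {} = 0.\<close>

definition players :: "nat \<Rightarrow> nat set" where
  "players n = {1..n}"

definition core :: "nat \<Rightarrow> (nat set \<Rightarrow> real) \<Rightarrow> (nat \<Rightarrow> real) set" where
  "core n v = {x. (\<forall>i. i \<notin> players n \<longrightarrow> x i = 0)
                \<and> (\<forall>S. S \<subseteq> players n \<longrightarrow> (\<Sum>i\<in>S. x i) \<ge> v S)
                \<and> (\<Sum>i\<in>players n. x i) = v (players n)}"

definition balanced :: "nat \<Rightarrow> (nat set \<Rightarrow> real) \<Rightarrow> bool" where
  "balanced n v \<longleftrightarrow> core n v \<noteq> {}"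

definition G_plus :: "nat \<Rightarrow> (nat set \<Rightarrow> real) set" where
  "G_plus n = {v. v {} = 0 \<and> (\<forall>S. \<not> S \<subseteq> players n \<longrightarrow> v S = 0)
               \<and> (\<forall>S. S \<subseteq> players n \<longrightarrow> v S \<ge> 0) \<and> v (players n) = 1}"

definition BG_plus :: "nat \<Rightarrow> (nat set \<Rightarrow> real) set" where
  "BG_plus n = {v \<in> G_plus n. balanced n v}"

text \<open>Vertex (extreme point) of a set of games, spelled out as the library's
  extreme_point_of (x in P and x lies in no open segment between points of P),
  since the function space nat set => real carries no real_vector instance.\<close>
definition vertex_of :: "(nat set \<Rightarrow> real) \<Rightarrow> (nat set \<Rightarrow> real) set \<Rightarrow> bool" where
  "vertex_of x P \<longleftrightarrow> x \<in> P \<and>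
     (\<forall>a\<in>P. \<forall>b\<in>P. \<forall>u::real. a \<noteq> b \<and> 0 < u \<and> u < 1 \<longrightarrow>
        x \<noteq> (\<lambda>S. (1 - u) * a S + u * b S))"

definition v_fam :: "nat \<Rightarrow> nat set set \<Rightarrow> (nat set \<Rightarrow> real)" where
  "v_fam n D = (\<lambda>S. if S \<in> D \<or> S = players n then 1 else 0)"

end

theory Submission
  imports Defs
begin

text \<open>A core allocation of a nonnegative game is nonnegative and has total 1; if v(S) = 1 it must
  therefore give everything to S. Hence every game in BG_+(n) has values in [0, 1], so a 0-1 valued
  member such as v_D cannot be split into a proper convex combination: v_D is a vertex iff it is
  balanced. A core allocation of v_D is concentrated on every S in D, i.e. on the intersection of D,
  which must thus be nonempty; conversely the unit allocation at a common player lies in the core.\<close>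

lemma finite_players: "finite (players n)"
  by (simp add: players_def)

lemma core_nonneg:
  assumes "v \<in> G_plus n" and "x \<in> core n v"
  shows "0 \<le> x i"
proof (cases "i \<in> players n")
  case True
  then have "v {i} \<le> (\<Sum>j\<in>{i}. x j)" using assms(2) by (auto simp: core_def)
  moreover have "0 \<le> v {i}" using assms(1) True by (auto simp: G_plus_def)
  ultimately show ?thesis by simp
next
  case False
  then show ?thesis using assms(2) by (simp add: core_def)
qed

lemma core_sum_players:
  assumes "v \<in> G_plus n" and "x \<in> core n v"
  shows "(\<Sum>i\<in>players n. x i) = 1"
  using assms by (simp add: core_def G_plus_def)

lemma core_sum_le_one:
  assumes "v \<in> G_plus n" and "x \<in> core n v" and "S \<subseteq> players n"
  shows "(\<Sum>i\<in>S. x i) \<le> 1"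
proof -
  have "(\<Sum>i\<in>S. x i) \<le> (\<Sum>i\<in>players n. x i)"
    using assms by (intro sum_mono2 finite_players) (auto intro: core_nonneg)
  then show ?thesis using core_sum_players[OF assms(1,2)] by simp
qed

lemma core_vanishes_outside_coalition_of_value_one:
  assumes "v \<in> G_plus n" and "x \<in> core n v" and "S \<subseteq> players n" and "v S = 1"
    and "i \<notin> S"
  shows "x i = 0"
proof (cases "i \<in> players n")
  case True
  have "1 \<le> (\<Sum>j\<in>S. x j)" using assms(2-4) by (auto simp: core_def)
  moreover have "(\<Sum>j\<in>players n. x j) = (\<Sum>j\<in>players n - S. x j) + (\<Sum>j\<in>S. x j)"
    using sum.subset_diff[OF assms(3) finite_players] by simp
  ultimately have "(\<Sum>j\<in>players n - S. x j) \<le> 0"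
    using core_sum_players[OF assms(1,2)] by linarith
  moreover have "x i \<le> (\<Sum>j\<in>players n - S. x j)"
    using True assms by (intro member_le_sum) (auto intro: core_nonneg simp: finite_players)
  ultimately show ?thesis using core_nonneg[OF assms(1,2)] by (meson order.antisym order.trans)
next
  case False
  then show ?thesis using assms(2) by (simp add: core_def)
qed

lemma BG_plus_bounded:
  assumes "a \<in> BG_plus n"
  shows "0 \<le> a S \<and> a S \<le> 1"
proof -
  from assms obtain x where x: "x \<in> core n a" and G: "a \<in> G_plus n"
    by (auto simp: BG_plus_def balanced_def)
  show ?thesis
  proof (cases "S \<subseteq> players n")
    case True
    then have "a S \<le> (\<Sum>i\<in>S. x i)" using x by (auto simp: core_def)
    then show ?thesis using core_sum_le_one[OF G x True] G True by (auto simp: G_plus_def)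
  next
    case False
    then show ?thesis using G by (simp add: G_plus_def)
  qed
qed

lemma convex_comb_eq_zero_or_one_imp_eq:
  fixes a b u :: real
  assumes "0 \<le> a" "a \<le> 1" "0 \<le> b" "b \<le> 1" "0 < u" "u < 1"
    and "(1 - u) * a + u * b \<in> {0, 1}"
  shows "a = b"
proof -
  have "0 \<le> (1 - u) * a" "0 \<le> u * b" "0 \<le> (1 - u) * (1 - a)" "0 \<le> u * (1 - b)"
    using assms(1-6) by simp_all
  moreover have "(1 - u) * (1 - a) + u * (1 - b) = 1 - ((1 - u) * a + u * b)"
    by (simp add: algebra_simps)
  ultimately consider "(1 - u) * a = 0" "u * b = 0" | "(1 - u) * (1 - a) = 0" "u * (1 - b) = 0"
    using assms(7) by (metis add_nonneg_eq_0_iff diff_self insertE singletonD)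
  then show ?thesis using assms(5,6) by cases auto
qed

lemma vertex_of_zero_one_valued:
  assumes "v \<in> P" and "\<And>a S. a \<in> P \<Longrightarrow> 0 \<le> a S \<and> a S \<le> 1" and "\<And>S. v S \<in> {0, 1}"
  shows "vertex_of v P"
  unfolding vertex_of_def
proof (intro conjI assms(1) ballI allI impI)
  fix a b u assume a: "a \<in> P" and b: "b \<in> P" and abu: "a \<noteq> b \<and> 0 < u \<and> (u::real) < 1"
  show "v \<noteq> (\<lambda>S. (1 - u) * a S + u * b S)"
  proof
    assume v: "v = (\<lambda>S. (1 - u) * a S + u * b S)"
    have "a S = b S" for S
      using assms(2)[OF a, of S] assms(2)[OF b, of S] abu assms(3)[of S] v
      by (intro convex_comb_eq_zero_or_one_imp_eq) auto
    then show False using abu by auto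
  qed
qed

lemma v_fam_in_G_plus:
  assumes "n \<ge> 1" and "D \<subseteq> Pow (players n) - {{}}"
  shows "v_fam n D \<in> G_plus n"
proof -
  have "players n \<noteq> {}" using assms(1) by (auto simp: players_def)
  then show ?thesis using assms(2) by (auto simp: G_plus_def v_fam_def)
qed

lemma balanced_v_fam_iff:
  assumes "n \<ge> 1" and "D \<subseteq> Pow (players n) - {{}}"
  shows "balanced n (v_fam n D) \<longleftrightarrow> D = {} \<or> \<Inter> D \<noteq> {}"
proof
  assume "balanced n (v_fam n D)"
  then obtain x where x: "x \<in> core n (v_fam n D)" by (auto simp: balanced_def)
  have G: "v_fam n D \<in> G_plus n" using v_fam_in_G_plus[OF assms] .
  show "D = {} \<or> \<Inter> D \<noteq> {}"
  proof (rule ccontr)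
    assume "\<not> (D = {} \<or> \<Inter> D \<noteq> {})"
    then have no_common_player: "\<exists>S\<in>D. i \<notin> S" for i by blast
    have "x i = 0" for i
    proof -
      obtain S where "S \<in> D" "i \<notin> S" using no_common_player by blast
      then show ?thesis
        using assms(2) by (intro core_vanishes_outside_coalition_of_value_one[OF G x])
          (auto simp: v_fam_def)
    qed
    then show False using core_sum_players[OF G x] by simp
  qed
next
  assume "D = {} \<or> \<Inter> D \<noteq> {}"
  then obtain i where i: "i \<in> players n" "\<forall>S\<in>D. i \<in> S"
  proof (cases "D = {}")
    case True
    then show ?thesis using that assms(1) by (auto simp: players_def)
  next
    case False
    then obtain i S where "i \<in> \<Inter> D" "S \<in> D" using \<open>D = {} \<or> \<Inter> D \<noteq> {}\<close> by blast
    then show ?thesis using that assms(2) by blast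
  qed
  define x where "x = (\<lambda>j. if j = i then 1 else 0 :: real)"
  have sum_x: "(\<Sum>j\<in>S. x j) = (if i \<in> S then 1 else 0)" if "S \<subseteq> players n" for S
    using finite_subset[OF that finite_players] by (simp add: x_def)
  have "x \<in> core n (v_fam n D)"
    using i sum_x by (auto simp: core_def x_def v_fam_def)
  then show "balanced n (v_fam n D)" by (auto simp: balanced_def)
qed

theorem theorem9:
  fixes n :: nat and D :: "nat set set"
  assumes "n \<ge> 1"
    and "D \<subseteq> Pow (players n) - {{}, players n}"
  shows "vertex_of (v_fam n D) (BG_plus n) \<longleftrightarrow> (D = {} \<or> \<Inter> D \<noteq> {})"
proof -
  have D: "D \<subseteq> Pow (players n) - {{}}" using assms(2) by blast
  have "vertex_of (v_fam n D) (BG_plus n) \<longleftrightarrow> v_fam n D \<in> BG_plus n"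
  proof
    assume "v_fam n D \<in> BG_plus n"
    then show "vertex_of (v_fam n D) (BG_plus n)"
      by (rule vertex_of_zero_one_valued) (auto simp: BG_plus_bounded v_fam_def)
  qed (simp add: vertex_of_def)
  also have "\<dots> \<longleftrightarrow> balanced n (v_fam n D)"
    using v_fam_in_G_plus[OF assms(1) D] by (simp add: BG_plus_def)
  finally show ?thesis using balanced_v_fam_iff[OF assms(1) D] by simp
qed

end
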